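(* Let $\mathscr X$ be a compact subset of $\mathbb R^d$ and $\|\cdot\|$ a norm on $\mathbb R^d$. Let $a\in(0,1]$ and $\alpha_1,\alpha_2,\ldots\in[a,1]$. Let $\mathbf x_1\in\mathscr X$ be arbitrary and, for $n=1,2,\ldots$, let $\mathbf x_{n+1}$ be any point of $\mathscr X$ such that $\min_{1\le i\le n}\|\mathbf x_{n+1}-\mathbf x_i\|\ge\alpha_n\,\mathsf{CR}(\mathbf X_n)$, where $\mathbf X_n=\{\mathbf x_1,\ldots,\mathbf x_n\}$ (relaxed greedy packing). Then for all $n\ge2$, $$\mathsf{CR}(\mathbf X_n)\le\frac2a\,\mathsf{CR}_n^*,\qquad\mathsf{SR}(\mathbf X_n)\ge\frac a2\,\mathsf{SR}_n^*,\qquad\mathsf{MR}(\mathbf X_n)\le\frac2a.$$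
   Context: For a design $\mathbf X_n$ of $n$ points in $\mathscr X$: fill distance $\mathsf{CR}(\mathbf X_n)=\sup_{\mathbf x\in\mathscr X}\min_{\mathbf x_i\in\mathbf X_n}\|\mathbf x-\mathbf x_i\|$; separation radius $\mathsf{SR}(\mathbf X_n)=\tfrac12\min_{\mathbf x_i\ne\mathbf x_j\in\mathbf X_n}\|\mathbf x_i-\mathbf x_j\|$; mesh-ratio $\mathsf{MR}(\mathbf X_n)=\mathsf{CR}(\mathbf X_n)/\mathsf{SR}(\mathbf X_n)$. $\mathsf{CR}_n^*$ is the minimum of $\mathsf{CR}$ and $\mathsf{SR}_n^*$ the maximum of $\mathsf{SR}$ over all $n$-point designs of distinct points in $\mathscr X$. *)

theory Defs
  imports "HOL-Analysis.Analysis"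
begin

definition is_norm :: "('a::euclidean_space \<Rightarrow> real) \<Rightarrow> bool" where
  "is_norm N \<longleftrightarrow>
     (\<forall>x. 0 \<le> N x) \<and> (\<forall>x. N x = 0 \<longleftrightarrow> x = 0) \<and>
     (\<forall>c x. N (c *\<^sub>R x) = \<bar>c\<bar> * N x) \<and> (\<forall>x y. N (x + y) \<le> N x + N y)"

text \<open>Fill distance (covering radius) of a finite design D in the domain X w.r.t. norm N.\<close>
definition fill_dist :: "('a::euclidean_space \<Rightarrow> real) \<Rightarrow> 'a set \<Rightarrow> 'a set \<Rightarrow> real" where
  "fill_dist N X D = (SUP y\<in>X. Min ((\<lambda>p. N (y - p)) ` D))"

definition sep_rad :: "('a::euclidean_space \<Rightarrow> real) \<Rightarrow> 'a set \<Rightarrow> real" where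
  "sep_rad N D = Min {N (p - q) | p q. p \<in> D \<and> q \<in> D \<and> p \<noteq> q} / 2"

definition mesh_ratio :: "('a::euclidean_space \<Rightarrow> real) \<Rightarrow> 'a set \<Rightarrow> 'a set \<Rightarrow> real" where
  "mesh_ratio N X D = fill_dist N X D / sep_rad N D"

definition designs :: "'a set \<Rightarrow> nat \<Rightarrow> 'a set set" where
  "designs X n = {D. D \<subseteq> X \<and> finite D \<and> card D = n}"

definition opt_fill :: "('a::euclidean_space \<Rightarrow> real) \<Rightarrow> 'a set \<Rightarrow> nat \<Rightarrow> real" where
  "opt_fill N X n = (INF D\<in>designs X n. fill_dist N X D)"

definition opt_sep :: "('a::euclidean_space \<Rightarrow> real) \<Rightarrow> 'a set \<Rightarrow> nat \<Rightarrow> real" where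
  "opt_sep N X n = (SUP D\<in>designs X n. sep_rad N D)"

end

(* The greedy rule puts each new point at distance at least a * CR(X_k) from the
   earlier ones, and CR(X_k) decreases in k, so any two of x_1, ..., x_(m+1) are at least
   a * CR(X_m) apart.  Both bounds then come from a pigeonhole argument on nearest points:
   among x_1, ..., x_(n+1) two share a nearest point of an optimal n-point design D, so
   a * CR(X_n) <= 2 * CR(D); and two points of any n-point design share a nearest point
   among x_1, ..., x_(n-1), so SR_n^* <= CR(X_(n-1)) <= 2 * SR(X_n) / a. *)
theory Submission
  imports Defs
begin

locale norm_function =
  fixes N :: "'a::euclidean_space \<Rightarrow> real"
  assumes is_norm: "is_norm N"
begin

lemma N_nonneg: "0 \<le> N x"
  using is_norm unfolding is_norm_def by blast

lemma N_eq_0_iff: "N x = 0 \<longleftrightarrow> x = 0"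
  using is_norm unfolding is_norm_def by blast

lemma N_pos: "x \<noteq> 0 \<Longrightarrow> 0 < N x"
  using N_nonneg[of x] N_eq_0_iff[of x] by linarith

lemma N_scaleR: "N (c *\<^sub>R x) = \<bar>c\<bar> * N x"
  using is_norm unfolding is_norm_def by blast

lemma N_triangle: "N (x + y) \<le> N x + N y"
  using is_norm unfolding is_norm_def by blast

lemma N_minus_commute: "N (x - y) = N (y - x)"
  using N_scaleR[of "-1" "x - y"] by simp

lemma N_triangle_diff: "N (x - z) \<le> N (x - y) + N (y - z)"
  using N_triangle[of "x - y" "y - z"] by simp

lemma N_sum_le: "N (sum f S) \<le> (\<Sum>i\<in>S. N (f i))"
proof (induction S rule: infinite_finite_induct)
  case (infinite S)
  then show ?case using N_eq_0_iff[of 0] by simp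
next
  case empty
  then show ?case using N_eq_0_iff[of 0] by simp
next
  case (insert i S)
  then show ?case using N_triangle[of "f i" "sum f S"] by simp
qed

lemma N_le_norm: "N x \<le> (\<Sum>b\<in>Basis. N b) * norm x"
proof -
  have "N x = N (\<Sum>b\<in>Basis. (x \<bullet> b) *\<^sub>R b)"
    by (simp add: euclidean_representation)
  also have "\<dots> \<le> (\<Sum>b\<in>Basis. N ((x \<bullet> b) *\<^sub>R b))"
    by (rule N_sum_le)
  also have "\<dots> = (\<Sum>b\<in>Basis. \<bar>x \<bullet> b\<bar> * N b)"
    by (simp add: N_scaleR)
  also have "\<dots> \<le> (\<Sum>b\<in>Basis. norm x * N b)"
    by (intro sum_mono mult_right_mono) (auto simp: Basis_le_norm N_nonneg)
  finally show ?thesis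
    by (simp add: sum_distrib_left mult.commute)
qed

end

abbreviation dist_to_design :: "('a \<Rightarrow> real) \<Rightarrow> 'a set \<Rightarrow> 'a::euclidean_space \<Rightarrow> real" where
  "dist_to_design N D y \<equiv> Min ((\<lambda>p. N (y - p)) ` D)"

locale norm_design_space = norm_function N
  for N :: "'a::euclidean_space \<Rightarrow> real" +
  fixes X :: "'a set"
  assumes bounded: "bounded X"
begin

lemma bdd_above_dist_to_design:
  assumes "finite D" "p \<in> D"
  shows "bdd_above (dist_to_design N D ` X)"
proof -
  obtain B where B: "\<And>y. y \<in> X \<Longrightarrow> norm y \<le> B"
    using bounded bounded_iff by blast
  define C where "C = (\<Sum>b\<in>Basis. N b)"
  have "C \<ge> 0"
    unfolding C_def by (simp add: sum_nonneg N_nonneg)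
  have "dist_to_design N D y \<le> C * (B + norm p)" if "y \<in> X" for y
  proof -
    have "dist_to_design N D y \<le> N (y - p)"
      using assms by simp
    also have "\<dots> \<le> C * norm (y - p)"
      unfolding C_def by (rule N_le_norm)
    also have "\<dots> \<le> C * (B + norm p)"
      using \<open>C \<ge> 0\<close> B[OF that] norm_triangle_ineq4[of y p] by (intro mult_left_mono) auto
    finally show ?thesis .
  qed
  then show ?thesis
    by (intro bdd_aboveI2)
qed

lemma dist_to_design_le_fill_dist:
  assumes "finite D" "D \<noteq> {}" "y \<in> X"
  shows "dist_to_design N D y \<le> fill_dist N X D"
  unfolding fill_dist_def
  using assms bdd_above_dist_to_design[OF assms(1)] by (intro cSUP_upper) auto

lemma fill_dist_nonneg:
  assumes "finite D" "D \<noteq> {}" "X \<noteq> {}"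
  shows "0 \<le> fill_dist N X D"
proof -
  obtain y where "y \<in> X"
    using assms(3) by blast
  have "0 \<le> dist_to_design N D y"
    using assms(1,2) N_nonneg by simp
  also have "\<dots> \<le> fill_dist N X D"
    using dist_to_design_le_fill_dist[OF assms(1,2) \<open>y \<in> X\<close>] .
  finally show ?thesis .
qed

lemma fill_dist_antimono:
  assumes "finite D'" "D \<noteq> {}" "D \<subseteq> D'" "X \<noteq> {}"
  shows "fill_dist N X D' \<le> fill_dist N X D"
  unfolding fill_dist_def
proof (rule cSUP_least[OF assms(4)])
  fix y
  assume "y \<in> X"
  have "finite D"
    using assms(1,3) finite_subset by blast
  have "dist_to_design N D' y \<le> dist_to_design N D y"
    using assms \<open>finite D\<close> by (intro Min_antimono) auto
  also have "\<dots> \<le> fill_dist N X D"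
    using dist_to_design_le_fill_dist[OF \<open>finite D\<close> assms(2) \<open>y \<in> X\<close>] .
  finally show "dist_to_design N D' y \<le> (SUP y\<in>X. dist_to_design N D y)"
    unfolding fill_dist_def .
qed

lemma close_pair_if_card_less:
  assumes "finite D" "D \<noteq> {}" "finite A" "card D < card A" "g ` A \<subseteq> X"
  obtains i j where "i \<in> A" "j \<in> A" "i \<noteq> j" "N (g i - g j) \<le> 2 * fill_dist N X D"
proof -
  define nearest where "nearest y = (SOME p. p \<in> D \<and> N (y - p) = dist_to_design N D y)" for y
  have "\<exists>p. p \<in> D \<and> N (y - p) = dist_to_design N D y" for y
  proof -
    have "dist_to_design N D y \<in> (\<lambda>p. N (y - p)) ` D"
      using assms(1,2) by (intro Min_in) auto
    then show ?thesis
      by auto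
  qed
  then have nearest: "nearest y \<in> D" "N (y - nearest y) = dist_to_design N D y" for y
    unfolding nearest_def by (metis (mono_tags, lifting) someI_ex)+
  have "card ((nearest \<circ> g) ` A) \<le> card D"
    using nearest(1) assms(1) by (intro card_mono) auto
  then have "\<not> inj_on (nearest \<circ> g) A"
    using assms(4) card_image by fastforce
  then obtain i j where ij: "i \<in> A" "j \<in> A" "i \<noteq> j" "nearest (g i) = nearest (g j)"
    unfolding inj_on_def by auto
  have "N (g i - g j) \<le> N (g i - nearest (g i)) + N (nearest (g i) - g j)"
    by (rule N_triangle_diff)
  also have "\<dots> = N (g i - nearest (g i)) + N (g j - nearest (g j))"
    using ij(4) N_minus_commute[of "nearest (g j)" "g j"] by simp
  also have "\<dots> \<le> 2 * fill_dist N X D"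
    using dist_to_design_le_fill_dist[OF assms(1,2), of "g i"]
      dist_to_design_le_fill_dist[OF assms(1,2), of "g j"] nearest(2) assms(5) ij(1,2)
    by (simp add: image_subset_iff)
  finally show ?thesis
    using that ij by blast
qed

end

lemma finite_pair_distances:
  "finite D \<Longrightarrow> finite {N (p - q) |p q. p \<in> D \<and> q \<in> D \<and> p \<noteq> q}"
  by (rule finite_subset[of _ "(\<lambda>(p, q). N (p - q)) ` (D \<times> D)"]) auto

lemma sep_rad_le:
  assumes "finite D" "p \<in> D" "q \<in> D" "p \<noteq> q"
  shows "sep_rad N D \<le> N (p - q) / 2"
  unfolding sep_rad_def using assms finite_pair_distances[OF assms(1)]
  by (intro divide_right_mono Min_le) auto

lemma sep_rad_ge:
  assumes "finite D" "p \<in> D" "q \<in> D" "p \<noteq> q"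
    and "\<And>p q. p \<in> D \<Longrightarrow> q \<in> D \<Longrightarrow> p \<noteq> q \<Longrightarrow> r \<le> N (p - q)"
  shows "r / 2 \<le> sep_rad N D"
  unfolding sep_rad_def using assms finite_pair_distances[OF assms(1)]
  by (intro divide_right_mono Min.boundedI) auto

locale relaxed_greedy_packing = norm_design_space N X
  for N :: "'a::euclidean_space \<Rightarrow> real" and X +
  fixes x :: "nat \<Rightarrow> 'a" and \<alpha> :: "nat \<Rightarrow> real" and a :: real
  assumes a_pos: "0 < a"
    and a_le_alpha: "\<And>n. n \<ge> 1 \<Longrightarrow> a \<le> \<alpha> n"
    and x1: "x 1 \<in> X"
    and greedy: "\<And>n. n \<ge> 1 \<Longrightarrow> x (n + 1) \<in> X \<and>
        Min ((\<lambda>i. N (x (n + 1) - x i)) ` {1..n}) \<ge> \<alpha> n * fill_dist N X (x ` {1..n})"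
begin

abbreviation fill :: "nat \<Rightarrow> real" where
  "fill k \<equiv> fill_dist N X (x ` {1..k})"

lemma x_in_X: "k \<ge> 1 \<Longrightarrow> x k \<in> X"
  using x1 greedy[of "k - 1"] by (cases "k = 1") auto

lemma fill_nonneg: "k \<ge> 1 \<Longrightarrow> 0 \<le> fill k"
  using x1 by (intro fill_dist_nonneg) auto

lemma fill_antimono: "1 \<le> k \<Longrightarrow> k \<le> m \<Longrightarrow> fill m \<le> fill k"
  using x1 by (intro fill_dist_antimono) auto

lemma greedy_separation:
  assumes "1 \<le> i" "i < j" "j \<le> m + 1" "1 \<le> m"
  shows "a * fill m \<le> N (x j - x i)"
proof -
  define k where "k = j - 1"
  have k: "k \<ge> 1" "j = k + 1" "k \<le> m" "i \<le> k"
    using assms unfolding k_def by auto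
  have "a * fill m \<le> a * fill k"
    using fill_antimono[OF k(1,3)] a_pos by simp
  also have "\<dots> \<le> \<alpha> k * fill k"
    using a_le_alpha[OF k(1)] fill_nonneg[OF k(1)] by (rule mult_right_mono)
  also have "\<dots> \<le> Min ((\<lambda>i. N (x (k + 1) - x i)) ` {1..k})"
    using greedy[OF k(1)] by simp
  also have "\<dots> \<le> N (x j - x i)"
    using assms(1) k by (intro Min_le) auto
  finally show ?thesis .
qed

lemma fill_le_opt_fill:
  assumes "n \<ge> 1" "designs X n \<noteq> {}"
  shows "fill n \<le> (2 / a) * opt_fill N X n"
proof -
  have "a * fill n \<le> 2 * fill_dist N X D" if "D \<in> designs X n" for D
  proof -
    have D: "finite D" "card D = n" "D \<noteq> {}"
      using that assms(1) unfolding designs_def by auto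
    have "x ` {1..n + 1} \<subseteq> X"
      using x_in_X by auto
    obtain i j where ij: "i \<in> {1..n + 1}" "j \<in> {1..n + 1}" "i \<noteq> j"
      and close: "N (x i - x j) \<le> 2 * fill_dist N X D"
      by (rule close_pair_if_card_less[OF D(1,3) _ _ \<open>x ` {1..n + 1} \<subseteq> X\<close>])
        (use D(2) in auto)
    have "a * fill n \<le> N (x i - x j)"
    proof (cases "i < j")
      case True
      then show ?thesis
        using ij greedy_separation[of i j n] assms(1) N_minus_commute[of "x i" "x j"] by auto
    next
      case False
      then show ?thesis
        using ij greedy_separation[of j i n] assms(1) by auto
    qed
    then show ?thesis
      using close by linarith
  qed
  then have "a / 2 * fill n \<le> opt_fill N X n"
    unfolding opt_fill_def by (intro cINF_greatest[OF assms(2)]) (simp add: mult.commute)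
  then show ?thesis
    using a_pos by (simp add: field_simps)
qed

lemma design_close_pair:
  assumes "n \<ge> 2" "D \<in> designs X n"
  obtains p q where "p \<in> D" "q \<in> D" "p \<noteq> q" "N (p - q) \<le> 2 * fill (n - 1)"
proof -
  have D: "finite D" "card D = n" "D \<subseteq> X"
    using assms(2) unfolding designs_def by auto
  have "card (x ` {1..n - 1}) < card D"
    using card_image_le[of "{1..n - 1}" x] D(2) assms(1) by simp
  show ?thesis
    by (rule close_pair_if_card_less[of "x ` {1..n - 1}" D id])
      (use D assms(1) that \<open>card (x ` {1..n - 1}) < card D\<close> in auto)
qed

lemma fill_pos:
  assumes "n \<ge> 2" "designs X n \<noteq> {}"
  shows "0 < fill (n - 1)"
proof -
  obtain D where "D \<in> designs X n"
    using assms(2) by blast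
  then obtain p q where "p \<noteq> q" "N (p - q) \<le> 2 * fill (n - 1)"
    using design_close_pair assms(1) by metis
  then show ?thesis
    using N_pos[of "p - q"] by simp
qed

lemma opt_sep_le_fill:
  assumes "n \<ge> 2" "designs X n \<noteq> {}"
  shows "opt_sep N X n \<le> fill (n - 1)"
  unfolding opt_sep_def
proof (rule cSUP_least[OF assms(2)])
  fix D
  assume D: "D \<in> designs X n"
  then obtain p q where "p \<in> D" "q \<in> D" "p \<noteq> q" "N (p - q) \<le> 2 * fill (n - 1)"
    using design_close_pair assms(1) by metis
  moreover have "finite D"
    using D unfolding designs_def by simp
  ultimately show "sep_rad N D \<le> fill (n - 1)"
    using sep_rad_le[of D p q N] by simp
qed

lemma sep_rad_ge_fill:
  assumes "n \<ge> 2" "0 < fill (n - 1)"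
  shows "a * fill (n - 1) / 2 \<le> sep_rad N (x ` {1..n})"
proof -
  have sep: "a * fill (n - 1) \<le> N (x j - x i)" if "i \<in> {1..n}" "j \<in> {1..n}" "i \<noteq> j" for i j
  proof (cases "i < j")
    case True
    then show ?thesis
      using that assms(1) greedy_separation[of i j "n - 1"] by auto
  next
    case False
    then show ?thesis
      using that assms(1) greedy_separation[of j i "n - 1"] N_minus_commute[of "x i" "x j"] by auto
  qed
  have "0 < a * fill (n - 1)"
    using a_pos assms(2) by simp
  also have "\<dots> \<le> N (x 2 - x 1)"
    using sep[of 1 2] assms(1) by simp
  finally have "x 2 \<noteq> x 1"
    using N_eq_0_iff[of 0] by auto
  show ?thesis
  proof (rule sep_rad_ge)
    show "finite (x ` {1..n})" "x 2 \<in> x ` {1..n}" "x 1 \<in> x ` {1..n}" "x 2 \<noteq> x 1"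
      using assms(1) \<open>x 2 \<noteq> x 1\<close> by auto
    fix p q
    assume "p \<in> x ` {1..n}" "q \<in> x ` {1..n}" "p \<noteq> q"
    then show "a * fill (n - 1) \<le> N (p - q)"
      using sep by blast
  qed
qed

end

theorem theorem5:
  fixes N :: "'a::euclidean_space \<Rightarrow> real"
    and X :: "'a set"
    and x :: "nat \<Rightarrow> 'a"
    and \<alpha> :: "nat \<Rightarrow> real"
    and a :: real
  assumes norm: "is_norm N"
    and cpt: "compact X"
    and a: "0 < a" "a \<le> 1"
    and alpha: "\<And>n. n \<ge> 1 \<Longrightarrow> a \<le> \<alpha> n \<and> \<alpha> n \<le> 1"
    and x1: "x 1 \<in> X"
    and greedy: "\<And>n. n \<ge> 1 \<Longrightarrow> x (n + 1) \<in> X \<and>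
        Min ((\<lambda>i. N (x (n + 1) - x i)) ` {1..n}) \<ge> \<alpha> n * fill_dist N X (x ` {1..n})"
    and n: "n \<ge> 2"
    and enough: "designs X n \<noteq> {}"
  shows "fill_dist N X (x ` {1..n}) \<le> (2 / a) * opt_fill N X n \<and>
         sep_rad N (x ` {1..n}) \<ge> (a / 2) * opt_sep N X n \<and>
         mesh_ratio N X (x ` {1..n}) \<le> 2 / a"
proof -
  interpret relaxed_greedy_packing N X x \<alpha> a
    using norm compact_imp_bounded[OF cpt] a(1) alpha x1 greedy
    by unfold_locales auto
  have sep: "a * fill (n - 1) / 2 \<le> sep_rad N (x ` {1..n})"
    using sep_rad_ge_fill n fill_pos[OF n enough] by blast
  have "(a / 2) * opt_sep N X n \<le> a * fill (n - 1) / 2"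
    using opt_sep_le_fill[OF n enough] a(1) by simp
  moreover have "fill n \<le> (2 / a) * sep_rad N (x ` {1..n})"
  proof -
    have "fill n \<le> fill (n - 1)"
      using fill_antimono[of "n - 1" n] n by simp
    then have "a * fill n \<le> a * fill (n - 1)"
      using a(1) by (simp add: mult_left_mono)
    with sep have "a * fill n \<le> 2 * sep_rad N (x ` {1..n})"
      by linarith
    then show ?thesis
      using a(1) by (simp add: field_simps)
  qed
  moreover have "0 < sep_rad N (x ` {1..n})"
    using sep fill_pos[OF n enough] a(1) by (smt (verit) divide_pos_pos mult_pos_pos)
  ultimately show ?thesis
    using fill_le_opt_fill[of n] n enough sep
    unfolding mesh_ratio_def by (simp add: divide_le_eq mult.commute)
qed

end
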